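(* Let $(\mathfrak g,[\cdot,\cdot],\alpha,\varepsilon)$ be a multiplicative color Hom-Lie algebra and let $\rho_1,\rho_2$ be representations of $\mathfrak g$ on $(M_1,\beta_1)$ and $(M_2,\beta_2)$ respectively. Define $\rho_1\otimes\rho_2:\mathfrak g\to\mathfrak{gl}(M_1\otimes M_2)$ by $(\rho_1\otimes\rho_2)(x)(m_1\otimes m_2)=\rho_1(x)(m_1)\otimes\beta_2(m_2)+\varepsilon(x,m_1)\,\beta_1(m_1)\otimes\rho_2(x)(m_2)$ for homogeneous $x,m_1,m_2$. Then $\rho_1\otimes\rho_2$ is a representation of $\mathfrak g$ on $(M_1\otimes M_2,\beta_1\otimes\beta_2)$.
   Context: $\mathbb K$ is a field of characteristic zero and $\Gamma$ an abelian group. A bicharacter is a map $\varepsilon:\Gamma\times\Gamma\to\mathbb K\setminus\{0\}$ with $\varepsilon(a,b)\varepsilon(b,a)=1$, $\varepsilon(a,b+c)=\varepsilon(a,b)\varepsilon(a,c)$, $\varepsilon(a+b,c)=\varepsilon(a,c)\varepsilon(b,c)$; for homogeneous elements $\varepsilon(x,y)=\varepsilon(\deg x,\deg y)$. A color Hom-Lie algebra $(\mathfrak g,[\cdot,\cdot],\alpha,\varepsilon)$: $\Gamma$-graded space, even bilinear bracket, even linear $\alpha$, with $[x,y]=-\varepsilon(x,y)[y,x]$ and $\varepsilon(z,x)[\alpha(x),[y,z]]+\varepsilon(x,y)[\alpha(y),[z,x]]+\varepsilon(y,z)[\alpha(z),[x,y]]=0$; multiplicative means $\alpha([x,y])=[\alpha(x),\alpha(y)]$.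 A representation of a multiplicative color Hom-Lie algebra $\mathfrak g$ on $(M,\beta)$ ($M$ $\Gamma$-graded, $\beta$ even linear) is an even linear $\rho:\mathfrak g\to\mathfrak{gl}(M)$ with $\rho([x,y])\circ\beta=\rho(\alpha(x))\circ\rho(y)-\varepsilon(x,y)\rho(\alpha(y))\circ\rho(x)$ and $\beta(\rho(x)(m))=\rho(\alpha(x))(\beta(m))$ for all $x\in\mathfrak g$, $m\in M$. $M_1\otimes M_2$ is graded by total degree. *)

theory Defs
  imports "HOL-Library.Poly_Mapping"
begin

text \<open>
  Model of Gamma-graded vector spaces over a field k: a graded vector space is given
  together with a homogeneous basis, i.e. it is the space  'b =>0 'k  of finitely
  supported k-valued functions on a basis set 'b, each basis vector carrying a degree
  (deg :: 'b => 'a, 'a = Gamma).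
\<close>

lift_definition smul :: "'k::semiring_0 \<Rightarrow> ('b \<Rightarrow>\<^sub>0 'k) \<Rightarrow> ('b \<Rightarrow>\<^sub>0 'k)"
  is "\<lambda>c f x. c * f x"
  by (rule finite_subset[rotated]) auto

definition homog :: "('b \<Rightarrow> 'a) \<Rightarrow> 'a \<Rightarrow> ('b \<Rightarrow>\<^sub>0 'k::zero) \<Rightarrow> bool" where
  "homog deg a v \<longleftrightarrow> (\<forall>i \<in> Poly_Mapping.keys v. deg i = a)"

definition lin :: "(('b \<Rightarrow>\<^sub>0 'k::semiring_0) \<Rightarrow> ('c \<Rightarrow>\<^sub>0 'k)) \<Rightarrow> bool" where
  "lin f \<longleftrightarrow> (\<forall>u v. f (u + v) = f u + f v) \<and> (\<forall>c v. f (smul c v) = smul c (f v))"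

definition even_map :: "('b \<Rightarrow> 'a) \<Rightarrow> ('c \<Rightarrow> 'a)
    \<Rightarrow> (('b \<Rightarrow>\<^sub>0 'k::zero) \<Rightarrow> ('c \<Rightarrow>\<^sub>0 'k)) \<Rightarrow> bool" where
  "even_map degB degC f \<longleftrightarrow> (\<forall>a v. homog degB a v \<longrightarrow> homog degC a (f v))"

definition bicharacter :: "('a::ab_group_add \<Rightarrow> 'a \<Rightarrow> 'k::field) \<Rightarrow> bool" where
  "bicharacter eps \<longleftrightarrow>
     (\<forall>a b. eps a b \<noteq> 0) \<and>
     (\<forall>a b. eps a b * eps b a = 1) \<and>
     (\<forall>a b c. eps a (b + c) = eps a b * eps a c) \<and>
     (\<forall>a b c. eps (a + b) c = eps a c * eps b c)"

definition color_hom_lie :: "('g \<Rightarrow> 'a::ab_group_add)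
    \<Rightarrow> (('g \<Rightarrow>\<^sub>0 'k::field) \<Rightarrow> ('g \<Rightarrow>\<^sub>0 'k) \<Rightarrow> ('g \<Rightarrow>\<^sub>0 'k))
    \<Rightarrow> (('g \<Rightarrow>\<^sub>0 'k) \<Rightarrow> ('g \<Rightarrow>\<^sub>0 'k)) \<Rightarrow> ('a \<Rightarrow> 'a \<Rightarrow> 'k) \<Rightarrow> bool" where
  "color_hom_lie degg br alpha eps \<longleftrightarrow>
     bicharacter eps \<and>
     (\<forall>x. lin (br x)) \<and> (\<forall>y. lin (\<lambda>x. br x y)) \<and>
     (\<forall>a b x y. homog degg a x \<longrightarrow> homog degg b y \<longrightarrow> homog degg (a + b) (br x y)) \<and>
     lin alpha \<and> even_map degg degg alpha \<and>
     (\<forall>a b x y. homog degg a x \<longrightarrow> homog degg b y \<longrightarrow>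
        br x y = - smul (eps a b) (br y x)) \<and>
     (\<forall>a b c x y z. homog degg a x \<longrightarrow> homog degg b y \<longrightarrow> homog degg c z \<longrightarrow>
        smul (eps c a) (br (alpha x) (br y z)) + smul (eps a b) (br (alpha y) (br z x))
          + smul (eps b c) (br (alpha z) (br x y)) = 0)"

definition multiplicative :: "(('g \<Rightarrow>\<^sub>0 'k::field) \<Rightarrow> ('g \<Rightarrow>\<^sub>0 'k) \<Rightarrow> ('g \<Rightarrow>\<^sub>0 'k))
    \<Rightarrow> (('g \<Rightarrow>\<^sub>0 'k) \<Rightarrow> ('g \<Rightarrow>\<^sub>0 'k)) \<Rightarrow> bool" where
  "multiplicative br alpha \<longleftrightarrow> (\<forall>x y. alpha (br x y) = br (alpha x) (alpha y))"

definition is_rep :: "('g \<Rightarrow> 'a::ab_group_add)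
    \<Rightarrow> (('g \<Rightarrow>\<^sub>0 'k::field) \<Rightarrow> ('g \<Rightarrow>\<^sub>0 'k) \<Rightarrow> ('g \<Rightarrow>\<^sub>0 'k))
    \<Rightarrow> (('g \<Rightarrow>\<^sub>0 'k) \<Rightarrow> ('g \<Rightarrow>\<^sub>0 'k)) \<Rightarrow> ('a \<Rightarrow> 'a \<Rightarrow> 'k)
    \<Rightarrow> ('m \<Rightarrow> 'a) \<Rightarrow> (('m \<Rightarrow>\<^sub>0 'k) \<Rightarrow> ('m \<Rightarrow>\<^sub>0 'k))
    \<Rightarrow> (('g \<Rightarrow>\<^sub>0 'k) \<Rightarrow> ('m \<Rightarrow>\<^sub>0 'k) \<Rightarrow> ('m \<Rightarrow>\<^sub>0 'k)) \<Rightarrow> bool" where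
  "is_rep degg br alpha eps degM beta rho \<longleftrightarrow>
     lin beta \<and> even_map degM degM beta \<and>
     (\<forall>x. lin (rho x)) \<and>
     (\<forall>x y m. rho (x + y) m = rho x m + rho y m) \<and>
     (\<forall>c x m. rho (smul c x) m = smul c (rho x m)) \<and>
     (\<forall>a b x m. homog degg a x \<longrightarrow> homog degM b m \<longrightarrow> homog degM (a + b) (rho x m)) \<and>
     (\<forall>a b x y m. homog degg a x \<longrightarrow> homog degg b y \<longrightarrow>
        rho (br x y) (beta m) = rho (alpha x) (rho y m) - smul (eps a b) (rho (alpha y) (rho x m))) \<and>
     (\<forall>x m. beta (rho x m) = rho (alpha x) (beta m))"

definition tdeg :: "('b1 \<Rightarrow> 'a::plus) \<Rightarrow> ('b2 \<Rightarrow> 'a) \<Rightarrow> 'b1 \<times> 'b2 \<Rightarrow> 'a" where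
  "tdeg d1 d2 p = d1 (fst p) + d2 (snd p)"

lift_definition tens :: "('b1 \<Rightarrow>\<^sub>0 'k::semiring_0) \<Rightarrow> ('b2 \<Rightarrow>\<^sub>0 'k) \<Rightarrow> ('b1 \<times> 'b2 \<Rightarrow>\<^sub>0 'k)"
  is "\<lambda>f g p. f (fst p) * g (snd p)"
proof -
  fix f :: "'b1 \<Rightarrow> 'k" and g :: "'b2 \<Rightarrow> 'k"
  assume "finite {x. f x \<noteq> 0}" "finite {x. g x \<noteq> 0}"
  then have "finite ({x. f x \<noteq> 0} \<times> {x. g x \<noteq> 0})" by simp
  then show "finite {p. f (fst p) * g (snd p) \<noteq> 0}"
    by (rule finite_subset[rotated]) auto
qed

text \<open>Data (R, B) of the tensor product representation rho1 (x) rho2 and of beta1 (x) beta2: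
  B is the linear map with B(m1 (x) m2) = beta1 m1 (x) beta2 m2; R is linear in x, each R x is
  linear, and for homogeneous x, m1 (and any m2, by linearity this covers homogeneous m2)
  R x (m1 (x) m2) = rho1 x m1 (x) beta2 m2 + eps(x, m1) beta1 m1 (x) rho2 x m2.\<close>
definition tensor_rep_data where
  "tensor_rep_data degg eps deg1 beta1 rho1 deg2 beta2 rho2 R B \<longleftrightarrow>
     lin B \<and> (\<forall>m1 m2. B (tens m1 m2) = tens (beta1 m1) (beta2 m2)) \<and>
     (\<forall>x. lin (R x)) \<and>
     (\<forall>x y t. R (x + y) t = R x t + R y t) \<and>
     (\<forall>c x t. R (smul c x) t = smul c (R x t)) \<and>
     (\<forall>a b x m1 m2. homog degg a x \<longrightarrow> homog deg1 b m1 \<longrightarrow>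
        R x (tens m1 m2) = tens (rho1 x m1) (beta2 m2)
                           + smul (eps a b) (tens (beta1 m1) (rho2 x m2)))"

end

theory Submission
  imports Defs
begin

text \<open>
  Every map in sight is linear in each argument, so every identity only has to be checked on
  basis vectors, where the tensor product formula can be unfolded. For a bracket of degree
  a + b acting on a basis tensor of degree c + d the sign \<open>\<epsilon>(a + b, c)\<close> splits
  as \<open>\<epsilon>(a, c) \<epsilon>(b, c)\<close>; expanding both sides of the representation identity,
  the pure terms match those of the identities for \<open>\<rho>\<^sub>1\<close> and \<open>\<rho>\<^sub>2\<close>
  (using that \<open>\<beta>\<^sub>i\<close> intertwines \<open>\<rho>\<^sub>i(x)\<close> with \<open>\<rho>\<^sub>i(\<alpha> x)\<close>),
  while the two mixed terms cancel because \<open>\<epsilon>(a, b) \<epsilon>(b, a) = 1\<close>.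
\<close>

abbreviation basis :: "'b \<Rightarrow> ('b \<Rightarrow>\<^sub>0 'k::{zero,one})" where
  "basis i \<equiv> Poly_Mapping.single i 1"

lemma lookup_smul [simp]: "Poly_Mapping.lookup (smul c f) x = c * Poly_Mapping.lookup f x"
  by (simp add: smul.rep_eq)

lemma lookup_tens [simp]:
  "Poly_Mapping.lookup (tens u v) p = Poly_Mapping.lookup u (fst p) * Poly_Mapping.lookup v (snd p)"
  by (simp add: tens.rep_eq)

lemma smul_0_left [simp]: "smul 0 v = 0"
  by (rule poly_mapping_eqI) simp

lemma smul_1_left [simp]: "smul 1 v = (v :: _ \<Rightarrow>\<^sub>0 'k::semiring_1)"
  by (rule poly_mapping_eqI) simp

lemma smul_add: "smul c (u + v) = smul c u + smul c v"
  by (rule poly_mapping_eqI) (simp add: lookup_add algebra_simps)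

lemma smul_smul: "smul c (smul d u) = smul (c * d) (u :: 'b \<Rightarrow>\<^sub>0 'k::comm_semiring_0)"
  by (rule poly_mapping_eqI) (simp add: algebra_simps)

lemma keys_smul_subset: "Poly_Mapping.keys (smul c t) \<subseteq> Poly_Mapping.keys t"
  by (auto simp: in_keys_iff)

lemma poly_mapping_basis_expansion:
  "p = (\<Sum>i\<in>Poly_Mapping.keys p. smul (Poly_Mapping.lookup p i) (basis i :: _ \<Rightarrow>\<^sub>0 'k::semiring_1))"
proof -
  have "p = (\<Sum>i\<in>Poly_Mapping.keys p. Poly_Mapping.single i (Poly_Mapping.lookup p i))"
    by (rule poly_mapping_eqI) (auto simp: lookup_sum lookup_single when_def in_keys_iff)
  also have "\<dots> = (\<Sum>i\<in>Poly_Mapping.keys p. smul (Poly_Mapping.lookup p i) (basis i))"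
    by (intro sum.cong refl poly_mapping_eqI) (simp add: lookup_single when_def)
  finally show ?thesis .
qed

lemma lin_add: "lin f \<Longrightarrow> f (u + v) = f u + f v"
  by (simp add: lin_def)

lemma lin_smul: "lin f \<Longrightarrow> f (smul c v) = smul c (f v)"
  by (simp add: lin_def)

lemma lin_zero: "lin (f :: ('b \<Rightarrow>\<^sub>0 'k::ring) \<Rightarrow> ('c \<Rightarrow>\<^sub>0 'k)) \<Longrightarrow> f 0 = 0"
  using lin_add[of f 0 0] by simp

lemma lin_sum: "lin (f :: ('b \<Rightarrow>\<^sub>0 'k::ring) \<Rightarrow> ('c \<Rightarrow>\<^sub>0 'k)) \<Longrightarrow> f (sum h A) = (\<Sum>a\<in>A. f (h a))"
proof (induction A rule: infinite_finite_induct)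
  case (insert x F)
  then show ?case using lin_add[OF insert(4), of "h x" "sum h F"] by simp
qed (simp_all add: lin_zero)

lemma lin_comp: "lin f \<Longrightarrow> lin g \<Longrightarrow> lin (\<lambda>x. f (g x))"
  by (simp add: lin_def)

lemma lin_plus: "lin f \<Longrightarrow> lin g \<Longrightarrow> lin (\<lambda>x. f x + (g x :: 'c \<Rightarrow>\<^sub>0 'k::comm_semiring_0))"
  by (simp add: lin_def smul_add algebra_simps)

lemma lin_minus: "lin f \<Longrightarrow> lin g \<Longrightarrow> lin (\<lambda>x. f x - (g x :: 'c \<Rightarrow>\<^sub>0 'k::comm_ring))"
  unfolding lin_def by (auto intro!: poly_mapping_eqI simp: lookup_add lookup_minus algebra_simps)

lemma lin_smul_comp: "lin f \<Longrightarrow> lin (\<lambda>x. smul c (f x :: 'c \<Rightarrow>\<^sub>0 'k::comm_semiring_0))"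
  unfolding lin_def by (auto intro!: poly_mapping_eqI simp: lookup_add algebra_simps)

lemma lin_scaling: "lin (smul (c :: 'k::comm_semiring_0))"
  unfolding lin_def by (auto intro!: poly_mapping_eqI simp: lookup_add algebra_simps)

lemma lin_tens_left: "lin (\<lambda>u. tens u v)"
  unfolding lin_def by (auto intro!: poly_mapping_eqI simp: lookup_add algebra_simps)

lemma lin_tens_right: "lin (\<lambda>v. tens (u :: _ \<Rightarrow>\<^sub>0 'k::comm_semiring_0) v)"
  unfolding lin_def by (auto intro!: poly_mapping_eqI simp: lookup_add algebra_simps mult.left_commute)

lemma lin_eq_on_keys:
  fixes f g :: "('b \<Rightarrow>\<^sub>0 'k::ring_1) \<Rightarrow> ('c \<Rightarrow>\<^sub>0 'k)"
  assumes "lin f" "lin g"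
    and "\<And>i. i \<in> Poly_Mapping.keys m \<Longrightarrow> f (basis i) = g (basis i)"
  shows "f m = g m"
proof -
  let ?expand = "\<lambda>h. \<Sum>i\<in>Poly_Mapping.keys m. smul (Poly_Mapping.lookup m i) (h (basis i))"
  have "f m = ?expand f"
    by (subst poly_mapping_basis_expansion) (simp add: lin_sum[OF assms(1)] lin_smul[OF assms(1)])
  also have "\<dots> = ?expand g"
    using assms(3) by simp
  also have "\<dots> = g m"
    by (subst (2) poly_mapping_basis_expansion) (simp add: lin_sum[OF assms(2)] lin_smul[OF assms(2)])
  finally show ?thesis .
qed

lemma bilin_eq_on_keys:
  fixes F G :: "('b \<Rightarrow>\<^sub>0 'k::ring_1) \<Rightarrow> ('c \<Rightarrow>\<^sub>0 'k) \<Rightarrow> ('d \<Rightarrow>\<^sub>0 'k)"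
  assumes "\<And>v. lin (\<lambda>u. F u v)" "\<And>u. lin (F u)" "\<And>v. lin (\<lambda>u. G u v)" "\<And>u. lin (G u)"
    and "\<And>i j. i \<in> Poly_Mapping.keys u \<Longrightarrow> F (basis i) (basis j) = G (basis i) (basis j)"
  shows "F u v = G u v"
  using assms(1,3)
proof (rule lin_eq_on_keys)
  fix i assume "i \<in> Poly_Mapping.keys u"
  then show "F (basis i) v = G (basis i) v"
    by (rule lin_eq_on_keys[OF assms(2,4) assms(5)])
qed

lemma homog_iff: "homog d a v \<longleftrightarrow> (\<forall>i. Poly_Mapping.lookup v i \<noteq> 0 \<longrightarrow> d i = a)"
  by (auto simp: homog_def in_keys_iff)

lemma homog_keys: "homog d a m \<Longrightarrow> i \<in> Poly_Mapping.keys m \<Longrightarrow> d i = a"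
  by (simp add: homog_def)

lemma homog_zero [simp]: "homog d a 0"
  by (simp add: homog_iff)

lemma homog_add: "homog d a u \<Longrightarrow> homog d a v \<Longrightarrow> homog d a (u + v)"
  by (simp add: homog_iff lookup_add) (metis add_0)

lemma homog_smul: "homog d a u \<Longrightarrow> homog d a (smul c u)"
  by (simp add: homog_iff) (metis mult_zero_right)

lemma homog_sum: "(\<And>x. x \<in> A \<Longrightarrow> homog d a (h x)) \<Longrightarrow> homog d a (sum h A)"
  by (induction A rule: infinite_finite_induct) (auto intro: homog_add)

lemma homog_single: "homog d (d i) (Poly_Mapping.single i c)"
  by (auto simp: homog_iff lookup_single when_def)

lemma homog_tens: "homog d1 a u \<Longrightarrow> homog d2 b v \<Longrightarrow> homog (tdeg d1 d2) (a + b) (tens u v)"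
  by (simp add: homog_iff tdeg_def) (metis mult_zero_left mult_zero_right fst_conv snd_conv)

lemma homog_lin_image:
  fixes f :: "('b \<Rightarrow>\<^sub>0 'k::ring_1) \<Rightarrow> ('c \<Rightarrow>\<^sub>0 'k)"
  assumes "lin f" "\<And>i. i \<in> Poly_Mapping.keys m \<Longrightarrow> homog d c (f (basis i))"
  shows "homog d c (f m)"
proof -
  have "f m = (\<Sum>i\<in>Poly_Mapping.keys m. smul (Poly_Mapping.lookup m i) (f (basis i)))"
    by (subst poly_mapping_basis_expansion) (simp add: lin_sum[OF assms(1)] lin_smul[OF assms(1)])
  then show ?thesis
    using assms(2) by (auto intro!: homog_sum homog_smul)
qed

lemma tens_basis: "tens (basis i) (basis j) = (basis (i, j) :: _ \<Rightarrow>\<^sub>0 'k::semiring_1)"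
  by (rule poly_mapping_eqI) (auto simp: lookup_single when_def)

lemma basis_pair_eq_tens: "basis p = tens (basis (fst p)) (basis (snd p) :: _ \<Rightarrow>\<^sub>0 'k::semiring_1)"
  by (simp add: tens_basis)

subsection \<open>Linear extension from a basis\<close>

definition lin_extend :: "('b \<Rightarrow> ('c \<Rightarrow>\<^sub>0 'k::comm_ring_1)) \<Rightarrow> ('b \<Rightarrow>\<^sub>0 'k) \<Rightarrow> ('c \<Rightarrow>\<^sub>0 'k)" where
  "lin_extend h t = (\<Sum>p\<in>Poly_Mapping.keys t. smul (Poly_Mapping.lookup t p) (h p))"

lemma lin_extend_superset:
  assumes "finite S" "Poly_Mapping.keys t \<subseteq> S"
  shows "lin_extend h t = (\<Sum>p\<in>S. smul (Poly_Mapping.lookup t p) (h p))"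
  unfolding lin_extend_def
  by (rule sum.mono_neutral_left[OF assms]) (auto simp: in_keys_iff)

lemma lin_extend_add: "lin_extend h (u + v) = lin_extend h u + lin_extend h v"
proof -
  let ?S = "Poly_Mapping.keys u \<union> Poly_Mapping.keys v"
  have S: "finite ?S" by simp
  have "lin_extend h (u + v) = (\<Sum>p\<in>?S. smul (Poly_Mapping.lookup (u + v) p) (h p))"
    by (rule lin_extend_superset[OF S keys_add])
  also have "\<dots> = (\<Sum>p\<in>?S. smul (Poly_Mapping.lookup u p) (h p) + smul (Poly_Mapping.lookup v p) (h p))"
    by (intro sum.cong refl poly_mapping_eqI) (simp add: lookup_add algebra_simps)
  also have "\<dots> = lin_extend h u + lin_extend h v"
    by (simp add: sum.distrib lin_extend_superset[OF S])
  finally show ?thesis .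
qed

lemma lin_extend_smul: "lin_extend h (smul c v) = smul c (lin_extend h v)"
proof -
  have "lin_extend h (smul c v) = (\<Sum>p\<in>Poly_Mapping.keys v. smul (Poly_Mapping.lookup (smul c v) p) (h p))"
    by (rule lin_extend_superset[OF finite_keys keys_smul_subset])
  then show ?thesis
    by (simp add: lin_extend_def lin_sum[OF lin_scaling] smul_smul)
qed

lemma lin_lin_extend: "lin (lin_extend h)"
  by (simp add: lin_def lin_extend_add lin_extend_smul)

lemma lin_extend_basis [simp]: "lin_extend h (basis p) = h p"
  by (simp add: lin_extend_def)

lemma lin_extend_plus: "lin_extend (\<lambda>p. h1 p + h2 p) t = lin_extend h1 t + lin_extend h2 t"
  by (simp add: lin_extend_def smul_add sum.distrib)

lemma lin_extend_smul_fun: "lin_extend (\<lambda>p. smul c (h p)) t = smul c (lin_extend h t)"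
  by (simp add: lin_extend_def lin_sum[OF lin_scaling] smul_smul mult.commute)

locale hom_rep =
  fixes degg :: "'g \<Rightarrow> 'a::ab_group_add"
    and br :: "('g \<Rightarrow>\<^sub>0 'k::field) \<Rightarrow> ('g \<Rightarrow>\<^sub>0 'k) \<Rightarrow> ('g \<Rightarrow>\<^sub>0 'k)"
    and alpha :: "('g \<Rightarrow>\<^sub>0 'k) \<Rightarrow> ('g \<Rightarrow>\<^sub>0 'k)"
    and eps :: "'a \<Rightarrow> 'a \<Rightarrow> 'k"
    and degM :: "'m \<Rightarrow> 'a"
    and beta :: "('m \<Rightarrow>\<^sub>0 'k) \<Rightarrow> ('m \<Rightarrow>\<^sub>0 'k)"
    and rho :: "('g \<Rightarrow>\<^sub>0 'k) \<Rightarrow> ('m \<Rightarrow>\<^sub>0 'k) \<Rightarrow> ('m \<Rightarrow>\<^sub>0 'k)"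
  assumes rep: "is_rep degg br alpha eps degM beta rho"
begin

lemma lin_beta: "lin beta"
  using rep by (simp add: is_rep_def)

lemma beta_homog: "homog degM a m \<Longrightarrow> homog degM a (beta m)"
  using rep by (simp add: is_rep_def even_map_def)

lemma lin_rho: "lin (rho x)"
  using rep by (simp add: is_rep_def)

lemma lin_rho_left: "lin (\<lambda>x. rho x m)"
  using rep by (simp add: is_rep_def lin_def)

lemma rho_homog: "homog degg a x \<Longrightarrow> homog degM b m \<Longrightarrow> homog degM (a + b) (rho x m)"
  using rep by (simp add: is_rep_def)

lemma rho_bracket:
  "homog degg a x \<Longrightarrow> homog degg b y \<Longrightarrow>
     rho (br x y) (beta m) = rho (alpha x) (rho y m) - smul (eps a b) (rho (alpha y) (rho x m))"
  using rep by (simp add: is_rep_def)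

lemma beta_rho: "beta (rho x m) = rho (alpha x) (beta m)"
  using rep by (simp add: is_rep_def)

end

locale rep_pair =
  rep1: hom_rep degg br alpha eps deg1 beta1 rho1 +
  rep2: hom_rep degg br alpha eps deg2 beta2 rho2
  for degg br alpha eps deg1 beta1 rho1 deg2 beta2 rho2
begin

definition tensor_beta where
  "tensor_beta = lin_extend (\<lambda>p. tens (beta1 (basis (fst p))) (beta2 (basis (snd p))))"

definition tensor_rho where
  "tensor_rho x = lin_extend (\<lambda>p. lin_extend (\<lambda>g.
      tens (rho1 (basis g) (basis (fst p))) (beta2 (basis (snd p)))
      + smul (eps (degg g) (deg1 (fst p))) (tens (beta1 (basis (fst p))) (rho2 (basis g) (basis (snd p))))) x)"

lemma lin_tensor_beta: "lin tensor_beta"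
  unfolding tensor_beta_def by (rule lin_lin_extend)

lemma tensor_beta_tens: "tensor_beta (tens m1 m2) = tens (beta1 m1) (beta2 m2)"
proof (rule bilin_eq_on_keys[where F = "\<lambda>m1 m2. tensor_beta (tens m1 m2)"])
  show "lin (\<lambda>m1. tensor_beta (tens m1 m2))" "lin (\<lambda>m2. tensor_beta (tens m1 m2))" for m1 m2
    by (intro lin_comp[OF lin_tensor_beta] lin_tens_left lin_tens_right)+
  show "lin (\<lambda>m1. tens (beta1 m1) (beta2 m2))" "lin (\<lambda>m2. tens (beta1 m1) (beta2 m2))" for m1 m2
    by (intro lin_comp[OF lin_tens_left rep1.lin_beta] lin_comp[OF lin_tens_right rep2.lin_beta])+
  show "tensor_beta (tens (basis i) (basis j)) = tens (beta1 (basis i)) (beta2 (basis j))" for i j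
    by (simp add: tensor_beta_def tens_basis)
qed

lemma lin_tensor_rho: "lin (tensor_rho x)"
  unfolding tensor_rho_def by (rule lin_lin_extend)

lemma tensor_rho_add: "tensor_rho (x + y) t = tensor_rho x t + tensor_rho y t"
  by (simp add: tensor_rho_def lin_extend_add lin_extend_plus)

lemma tensor_rho_smul: "tensor_rho (smul c x) t = smul c (tensor_rho x t)"
  by (simp add: tensor_rho_def lin_extend_smul lin_extend_smul_fun)

lemma tensor_rho_tens:
  assumes hx: "homog degg a x" and hm1: "homog deg1 b m1"
  shows "tensor_rho x (tens m1 m2) =
    tens (rho1 x m1) (beta2 m2) + smul (eps a b) (tens (beta1 m1) (rho2 x m2))"
proof (rule lin_eq_on_keys[where f = "\<lambda>x. tensor_rho x (tens m1 m2)"])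
  show "lin (\<lambda>x. tensor_rho x (tens m1 m2))"
    by (simp add: lin_def tensor_rho_add tensor_rho_smul)
  show "lin (\<lambda>x. tens (rho1 x m1) (beta2 m2) + smul (eps a b) (tens (beta1 m1) (rho2 x m2)))"
    by (intro lin_plus lin_smul_comp lin_comp[OF lin_tens_left rep1.lin_rho_left]
        lin_comp[OF lin_tens_right rep2.lin_rho_left])
next
  fix g assume "g \<in> Poly_Mapping.keys x"
  then have dg: "degg g = a" by (rule homog_keys[OF hx])
  let ?G = "\<lambda>m1 m2. tens (rho1 (basis g) m1) (beta2 m2)
     + smul (eps a b) (tens (beta1 m1) (rho2 (basis g) m2))"
  show "tensor_rho (basis g) (tens m1 m2) = ?G m1 m2"
  proof (rule bilin_eq_on_keys[where F = "\<lambda>m1 m2. tensor_rho (basis g) (tens m1 m2)"])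
    show "lin (\<lambda>m1. tensor_rho (basis g) (tens m1 m2))" "lin (\<lambda>m2. tensor_rho (basis g) (tens m1 m2))"
      for m1 m2 by (intro lin_comp[OF lin_tensor_rho] lin_tens_left lin_tens_right)+
    show "lin (\<lambda>m1. ?G m1 m2)" "lin (?G m1)" for m1 m2
      by (intro lin_plus lin_smul_comp lin_comp[OF lin_tens_left] lin_comp[OF lin_tens_right]
          rep1.lin_rho rep1.lin_beta rep2.lin_rho rep2.lin_beta)+
    fix i j assume "i \<in> Poly_Mapping.keys m1"
    then have "deg1 i = b" by (rule homog_keys[OF hm1])
    then show "tensor_rho (basis g) (tens (basis i) (basis j)) = ?G (basis i) (basis j)"
      using dg by (simp add: tensor_rho_def tens_basis)
  qed
qed

lemma tensor_rep_data_exists: "\<exists>R B. tensor_rep_data degg eps deg1 beta1 rho1 deg2 beta2 rho2 R B"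
  unfolding tensor_rep_data_def
  using lin_tensor_beta tensor_beta_tens lin_tensor_rho tensor_rho_add tensor_rho_smul tensor_rho_tens
  by blast

end

subsection \<open>The tensor product representation\<close>

locale tensor_rep = rep_pair +
  fixes R B
  assumes color: "color_hom_lie degg br alpha eps"
    and data: "tensor_rep_data degg eps deg1 beta1 rho1 deg2 beta2 rho2 R B"
begin

lemma bicharacter_eps: "bicharacter eps"
  using color unfolding color_hom_lie_def by blast

lemma eps_inverse: "eps a b * eps b a = 1"
  using bicharacter_eps by (simp add: bicharacter_def)

lemma eps_add_left: "eps (a + b) c = eps a c * eps b c"
  using bicharacter_eps by (simp add: bicharacter_def)

lemma eps_add_right: "eps a (b + c) = eps a b * eps a c"
  using bicharacter_eps by (simp add: bicharacter_def)

lemma lin_alpha: "lin alpha"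
  using color unfolding color_hom_lie_def by blast

lemma alpha_homog: "homog degg a x \<Longrightarrow> homog degg a (alpha x)"
  using color unfolding color_hom_lie_def even_map_def by blast

lemma bracket_homog: "homog degg a x \<Longrightarrow> homog degg b y \<Longrightarrow> homog degg (a + b) (br x y)"
  using color unfolding color_hom_lie_def by blast

lemma lin_B: "lin B"
  using data by (simp add: tensor_rep_data_def)

lemma B_tens: "B (tens m1 m2) = tens (beta1 m1) (beta2 m2)"
  using data by (simp add: tensor_rep_data_def)

lemma lin_R: "lin (R x)"
  using data by (simp add: tensor_rep_data_def)

lemma R_add: "R (x + y) t = R x t + R y t"
  using data by (simp add: tensor_rep_data_def)

lemma R_smul: "R (smul c x) t = smul c (R x t)"
  using data by (simp add: tensor_rep_data_def)

lemma lin_R_left: "lin (\<lambda>x. R x t)"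
  by (simp add: lin_def R_add R_smul)

lemma R_tens:
  "homog degg a x \<Longrightarrow> homog deg1 b m1 \<Longrightarrow>
     R x (tens m1 m2) = tens (rho1 x m1) (beta2 m2) + smul (eps a b) (tens (beta1 m1) (rho2 x m2))"
  using data by (simp add: tensor_rep_data_def)

lemma B_homog:
  assumes hv: "homog (tdeg deg1 deg2) a v"
  shows "homog (tdeg deg1 deg2) a (B v)"
proof (rule homog_lin_image[OF lin_B])
  fix p assume "p \<in> Poly_Mapping.keys v"
  then have "a = deg1 (fst p) + deg2 (snd p)"
    using homog_keys[OF hv] by (simp add: tdeg_def)
  moreover have "homog (tdeg deg1 deg2) (deg1 (fst p) + deg2 (snd p)) (B (basis p))"
    unfolding basis_pair_eq_tens[of p] B_tens
    by (intro homog_tens rep1.beta_homog rep2.beta_homog homog_single)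
  ultimately show "homog (tdeg deg1 deg2) a (B (basis p))"
    by simp
qed

lemma R_homog:
  assumes hx: "homog degg a x" and hm: "homog (tdeg deg1 deg2) b m"
  shows "homog (tdeg deg1 deg2) (a + b) (R x m)"
proof (rule homog_lin_image[OF lin_R])
  fix p assume "p \<in> Poly_Mapping.keys m"
  then have "tdeg deg1 deg2 p = b" by (rule homog_keys[OF hm])
  then have deg: "(a + deg1 (fst p)) + deg2 (snd p) = a + b" "deg1 (fst p) + (a + deg2 (snd p)) = a + b"
    by (simp_all add: tdeg_def algebra_simps)
  have "homog (tdeg deg1 deg2) ((a + deg1 (fst p)) + deg2 (snd p))
      (tens (rho1 x (basis (fst p))) (beta2 (basis (snd p))))"
    by (intro homog_tens rep1.rho_homog[OF hx] rep2.beta_homog homog_single)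
  moreover have "homog (tdeg deg1 deg2) (deg1 (fst p) + (a + deg2 (snd p)))
      (tens (beta1 (basis (fst p))) (rho2 x (basis (snd p))))"
    by (intro homog_tens rep1.beta_homog rep2.rho_homog[OF hx] homog_single)
  ultimately show "homog (tdeg deg1 deg2) (a + b) (R x (basis p))"
    unfolding basis_pair_eq_tens[of p] R_tens[OF hx homog_single] deg
    by (intro homog_add homog_smul)
qed

lemma B_R_tens:
  assumes hx: "homog degg a x" and hm1: "homog deg1 c m1"
  shows "B (R x (tens m1 m2)) = R (alpha x) (B (tens m1 m2))"
  unfolding B_tens R_tens[OF hx hm1] R_tens[OF alpha_homog[OF hx] rep1.beta_homog[OF hm1]]
    lin_add[OF lin_B] lin_smul[OF lin_B] rep1.beta_rho rep2.beta_rho ..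

lemma B_R: "B (R x m) = R (alpha x) (B m)"
proof (rule bilin_eq_on_keys[where F = "\<lambda>x m. B (R x m)" and G = "\<lambda>x m. R (alpha x) (B m)"])
  show "lin (\<lambda>x. B (R x m))" "lin (\<lambda>m. B (R x m))" for x m
    by (intro lin_comp[OF lin_B] lin_R_left lin_R)+
  show "lin (\<lambda>x. R (alpha x) (B m))" "lin (\<lambda>m. R (alpha x) (B m))" for x m
    by (intro lin_comp[OF lin_R_left lin_alpha] lin_comp[OF lin_R lin_B])+
  show "B (R (basis g) (basis p)) = R (alpha (basis g)) (B (basis p))" for g p
    unfolding basis_pair_eq_tens[of p] by (rule B_R_tens[OF homog_single homog_single])
qed

lemma R_bracket_tens:
  assumes hx: "homog degg a x" and hy: "homog degg b y" and hm1: "homog deg1 c m1"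
  shows "R (br x y) (B (tens m1 m2)) =
    R (alpha x) (R y (tens m1 m2)) - smul (eps a b) (R (alpha y) (R x (tens m1 m2)))"
proof -
  note hax = alpha_homog[OF hx] and hay = alpha_homog[OF hy]
  have lhs: "R (br x y) (B (tens m1 m2)) =
      tens (rho1 (alpha x) (rho1 y m1) - smul (eps a b) (rho1 (alpha y) (rho1 x m1))) (beta2 (beta2 m2))
      + smul (eps a c * eps b c) (tens (beta1 (beta1 m1))
          (rho2 (alpha x) (rho2 y m2) - smul (eps a b) (rho2 (alpha y) (rho2 x m2))))"
    unfolding B_tens R_tens[OF bracket_homog[OF hx hy] rep1.beta_homog[OF hm1]]
      rep1.rho_bracket[OF hx hy] rep2.rho_bracket[OF hx hy] eps_add_left ..
  have xy: "R (alpha x) (R y (tens m1 m2)) =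
      tens (rho1 (alpha x) (rho1 y m1)) (beta2 (beta2 m2))
      + smul (eps a b * eps a c) (tens (rho1 (alpha y) (beta1 m1)) (rho2 (alpha x) (beta2 m2)))
      + smul (eps b c) (tens (rho1 (alpha x) (beta1 m1)) (rho2 (alpha y) (beta2 m2))
          + smul (eps a c) (tens (beta1 (beta1 m1)) (rho2 (alpha x) (rho2 y m2))))"
    unfolding R_tens[OF hy hm1] lin_add[OF lin_R] lin_smul[OF lin_R]
      R_tens[OF hax rep1.rho_homog[OF hy hm1]] R_tens[OF hax rep1.beta_homog[OF hm1]]
      rep1.beta_rho rep2.beta_rho eps_add_right ..
  have yx: "R (alpha y) (R x (tens m1 m2)) =
      tens (rho1 (alpha y) (rho1 x m1)) (beta2 (beta2 m2))
      + smul (eps b a * eps b c) (tens (rho1 (alpha x) (beta1 m1)) (rho2 (alpha y) (beta2 m2)))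
      + smul (eps a c) (tens (rho1 (alpha y) (beta1 m1)) (rho2 (alpha x) (beta2 m2))
          + smul (eps b c) (tens (beta1 (beta1 m1)) (rho2 (alpha y) (rho2 x m2))))"
    unfolding R_tens[OF hx hm1] lin_add[OF lin_R] lin_smul[OF lin_R]
      R_tens[OF hay rep1.rho_homog[OF hx hm1]] R_tens[OF hay rep1.beta_homog[OF hm1]]
      rep1.beta_rho rep2.beta_rho eps_add_right ..
  have cancel: "eps a b * (eps b a * z) = z" for z
    by (metis eps_inverse mult.assoc mult_1)
  show ?thesis
    unfolding lhs xy yx
    by (rule poly_mapping_eqI) (simp add: lookup_add lookup_minus algebra_simps cancel)
qed

lemma R_bracket:
  assumes hx: "homog degg a x" and hy: "homog degg b y"
  shows "R (br x y) (B m) = R (alpha x) (R y m) - smul (eps a b) (R (alpha y) (R x m))"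
proof (rule lin_eq_on_keys[where f = "\<lambda>m. R (br x y) (B m)"])
  show "lin (\<lambda>m. R (br x y) (B m))" by (rule lin_comp[OF lin_R lin_B])
  show "lin (\<lambda>m. R (alpha x) (R y m) - smul (eps a b) (R (alpha y) (R x m)))"
    by (intro lin_minus lin_smul_comp lin_comp[OF lin_R lin_R])
  show "R (br x y) (B (basis p)) =
      R (alpha x) (R y (basis p)) - smul (eps a b) (R (alpha y) (R x (basis p)))" for p
    unfolding basis_pair_eq_tens[of p] by (rule R_bracket_tens[OF hx hy homog_single])
qed

lemma is_rep_tensor: "is_rep degg br alpha eps (tdeg deg1 deg2) B R"
  unfolding is_rep_def even_map_def
  using lin_B B_homog lin_R R_add R_smul R_homog R_bracket B_R by blast

end

theorem mainTheorem12:
  fixes degg :: "'g \<Rightarrow> 'a::ab_group_add"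
    and br :: "('g \<Rightarrow>\<^sub>0 'k::field_char_0) \<Rightarrow> ('g \<Rightarrow>\<^sub>0 'k) \<Rightarrow> ('g \<Rightarrow>\<^sub>0 'k)"
    and alpha :: "('g \<Rightarrow>\<^sub>0 'k) \<Rightarrow> ('g \<Rightarrow>\<^sub>0 'k)"
    and eps :: "'a \<Rightarrow> 'a \<Rightarrow> 'k"
    and deg1 :: "'b1 \<Rightarrow> 'a" and beta1 :: "('b1 \<Rightarrow>\<^sub>0 'k) \<Rightarrow> ('b1 \<Rightarrow>\<^sub>0 'k)"
    and rho1 :: "('g \<Rightarrow>\<^sub>0 'k) \<Rightarrow> ('b1 \<Rightarrow>\<^sub>0 'k) \<Rightarrow> ('b1 \<Rightarrow>\<^sub>0 'k)"
    and deg2 :: "'b2 \<Rightarrow> 'a" and beta2 :: "('b2 \<Rightarrow>\<^sub>0 'k) \<Rightarrow> ('b2 \<Rightarrow>\<^sub>0 'k)"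
    and rho2 :: "('g \<Rightarrow>\<^sub>0 'k) \<Rightarrow> ('b2 \<Rightarrow>\<^sub>0 'k) \<Rightarrow> ('b2 \<Rightarrow>\<^sub>0 'k)"
  assumes "color_hom_lie degg br alpha eps"
    and "multiplicative br alpha"
    and "is_rep degg br alpha eps deg1 beta1 rho1"
    and "is_rep degg br alpha eps deg2 beta2 rho2"
  shows "(\<exists>R B. tensor_rep_data degg eps deg1 beta1 rho1 deg2 beta2 rho2 R B) \<and>
         (\<forall>R B. tensor_rep_data degg eps deg1 beta1 rho1 deg2 beta2 rho2 R B \<longrightarrow>
                is_rep degg br alpha eps (tdeg deg1 deg2) B R)"
proof (intro conjI allI impI)
  interpret rep_pair degg br alpha eps deg1 beta1 rho1 deg2 beta2 rho2
    using assms(3,4) by unfold_locales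
  show "\<exists>R B. tensor_rep_data degg eps deg1 beta1 rho1 deg2 beta2 rho2 R B"
    by (rule tensor_rep_data_exists)
next
  fix R B assume "tensor_rep_data degg eps deg1 beta1 rho1 deg2 beta2 rho2 R B"
  then interpret tensor_rep degg br alpha eps deg1 beta1 rho1 deg2 beta2 rho2 R B
    using assms(1,3,4) by unfold_locales
  show "is_rep degg br alpha eps (tdeg deg1 deg2) B R"
    by (rule is_rep_tensor)
qed

end
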